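(* Let $\Sigma\subset\mathbb{R}^{n+1}$ be a pure, hereditary, $(n+1)$-dimensional fan with smoothness parameters $\alpha$, let $\Sigma'\subseteq\Sigma$ be a subfan, and let $W\subseteq\mathbb{R}^{n+1}$ be a linear subspace with $W\subseteq\bigcap_{\tau\in\Sigma_n\setminus\Sigma'_n}\mathrm{aff}(\tau)$. Then for every $i$, every associated prime $P$ of the $S$-module $H_i(\mathcal{R}/\mathcal{J}[\Sigma,\Sigma'])$ satisfies $P\subseteq I(W)$.
   Context: $S=\mathbb{R}[x_0,\ldots,x_n]$; $I(W)$ is the ideal of polynomials vanishing on $W$. A cone is the positive hull of finitely many vectors, of dimension that of its linear span $\mathrm{aff}(\gamma)$; a fan is a finite set of cones closed under faces, any two meeting in a common face; $\Sigma_i$ = $i$-dim cones, facets = maximal cones; pure: all facets of dim $n+1$; hereditary: for every face $\psi$ the graph on facets containing $\psi$ with edges for pairs meeting in an $n$-face is connected; $\partial\Sigma$ = subfan of faces contained in an $n$-face lying in exactly one facet; others interior. $l_\tau$ generates the ideal of $\mathrm{aff}(\tau)$. Smoothness parameters: integers $\alpha(\tau)\ge-1$ ($\tau\in\Sigma_n$), $\ge0$ on interior $\tau$; $\Sigma^{-1}$ = subfan of $\partial\Sigma$ of cones contained in some $\tau$ with $\alpha(\tau)=-1$; $J(\tau)=\langle l_\tau^{\alpha(\tau)+1}\rangle$ for $\tau\in\Sigma_n\setminus\Sigma^{-1}_n$, $J(\gamma)=\sum_{\tau\in\Sigma_n\setminus\Sigma^{-1}_n,\gamma\subseteq\tau}J(\tau)$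 for non-facets, $J(\sigma)=0$ for facets. With $u_\rho$ unit ray generators, $P(\gamma)=\mathrm{conv}(\{0\}\cup\{u_\rho:\rho\subseteq\gamma\})$, $\mathrm{lk}(\gamma)=\mathrm{conv}\{u_\rho\}$; $\mathcal{R}[\Sigma,\Sigma']_i=\bigoplus_{\gamma\in\Sigma_i\setminus\Sigma'_i}S$ with differential the cellular boundary of the relative cellular chain complex of $(P(\Sigma),\mathrm{lk}(\Sigma)\cup P(\Sigma'))$ with $S$ coefficients; $\mathcal{R}/\mathcal{J}[\Sigma,\Sigma']_i=\bigoplus_{\gamma\in\Sigma_i\setminus\Sigma'_i}S/J(\gamma)$ is the induced quotient complex. *)

theory Defs
  imports "HOL-Analysis.Analysis" "HOL-Library.Poly_Mapping"
begin

text \<open>Coordinates of R^(n+1) are indexed by a finite type 'n (so n+1 = CARD('n)).\<close>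

type_synonym 'n mpoly = "('n \<Rightarrow>\<^sub>0 nat) \<Rightarrow>\<^sub>0 real"

definition mpvar :: "'n \<Rightarrow> 'n mpoly" where
  "mpvar i = Poly_Mapping.single (Poly_Mapping.single i 1) 1"

definition mpconst :: "real \<Rightarrow> 'n mpoly" where
  "mpconst c = Poly_Mapping.single 0 c"

definition mpeval :: "('n::finite) mpoly \<Rightarrow> real^'n \<Rightarrow> real" where
  "mpeval p x = (\<Sum>m\<in>Poly_Mapping.keys p. Poly_Mapping.lookup p m * (\<Prod>j\<in>(UNIV::'n set). (x $ j) ^ (Poly_Mapping.lookup (m::'n \<Rightarrow>\<^sub>0 nat) j)))"

definition is_ideal :: "'n mpoly set \<Rightarrow> bool" where
  "is_ideal I \<longleftrightarrow> 0 \<in> I \<and> (\<forall>f\<in>I. \<forall>g\<in>I. f + g \<in> I) \<and> (\<forall>f\<in>I. \<forall>g. g * f \<in> I)"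

definition is_prime_ideal :: "'n mpoly set \<Rightarrow> bool" where
  "is_prime_ideal P \<longleftrightarrow> is_ideal P \<and> 1 \<notin> P \<and> (\<forall>f g. f * g \<in> P \<longrightarrow> f \<in> P \<or> g \<in> P)"

definition vanishing_ideal :: "(real^'n::finite) set \<Rightarrow> 'n mpoly set" where
  "vanishing_ideal W = {f. \<forall>w\<in>W. mpeval f w = 0}"

definition gen_ideal :: "'a set \<Rightarrow> ('a \<Rightarrow> 'n mpoly) \<Rightarrow> 'n mpoly set" where
  "gen_ideal A g = {f. \<exists>c. f = (\<Sum>a\<in>A. c a * g a)}"

type_synonym 'n cone = "(real^'n) set"

definition pos_hull :: "(real^'n) set \<Rightarrow> (real^'n) set" where
  "pos_hull V = {x. \<exists>c. (\<forall>v\<in>V. c v \<ge> 0) \<and> x = (\<Sum>v\<in>V. c v *\<^sub>R v)}"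

text \<open>A cone: positive hull of finitely many vectors. Its dimension is that of its
  linear span (library dim). Cones of a fan are pointed (so that rays exist).\<close>

definition is_cone :: "(real^'n::finite) set \<Rightarrow> bool" where
  "is_cone \<gamma> \<longleftrightarrow> (\<exists>V. finite V \<and> \<gamma> = pos_hull V)"

definition is_fan :: "(real^'n::finite) set set \<Rightarrow> bool" where
  "is_fan \<Sigma> \<longleftrightarrow> finite \<Sigma>
     \<and> (\<forall>\<gamma>\<in>\<Sigma>. is_cone \<gamma> \<and> \<gamma> \<inter> uminus ` \<gamma> = {0})
     \<and> (\<forall>\<gamma>\<in>\<Sigma>. \<forall>F. F face_of \<gamma> \<and> F \<noteq> {} \<longrightarrow> F \<in> \<Sigma>)
     \<and> (\<forall>\<gamma>\<in>\<Sigma>. \<forall>\<delta>\<in>\<Sigma>. (\<gamma> \<inter> \<delta>) face_of \<gamma> \<and> (\<gamma> \<inter> \<delta>) face_of \<delta>)"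

definition cones_of_dim :: "(real^'n::finite) set set \<Rightarrow> nat \<Rightarrow> (real^'n) set set" where
  "cones_of_dim \<Sigma> i = {\<gamma>\<in>\<Sigma>. dim \<gamma> = i}"

definition fan_facets :: "(real^'n::finite) set set \<Rightarrow> (real^'n) set set" where
  "fan_facets \<Sigma> = {\<sigma>\<in>\<Sigma>. \<not> (\<exists>\<delta>\<in>\<Sigma>. \<sigma> \<subset> \<delta>)}"

definition is_pure :: "(real^'n::finite) set set \<Rightarrow> bool" where
  "is_pure \<Sigma> \<longleftrightarrow> (\<forall>\<sigma>\<in>fan_facets \<Sigma>. dim \<sigma> = CARD('n))"

definition is_hereditary :: "(real^'n::finite) set set \<Rightarrow> bool" where
  "is_hereditary \<Sigma> \<longleftrightarrow> (\<forall>\<psi>\<in>\<Sigma>.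
     (\<forall>\<sigma>\<in>fan_facets \<Sigma>. \<forall>\<sigma>'\<in>fan_facets \<Sigma>. \<psi> \<subseteq> \<sigma> \<and> \<psi> \<subseteq> \<sigma>' \<longrightarrow>
        (\<lambda>a b. a \<in> fan_facets \<Sigma> \<and> b \<in> fan_facets \<Sigma> \<and> \<psi> \<subseteq> a \<and> \<psi> \<subseteq> b
               \<and> (a \<inter> b) \<in> cones_of_dim \<Sigma> (CARD('n) - 1))\<^sup>*\<^sup>* \<sigma> \<sigma>'))"

definition boundary_fan :: "(real^'n::finite) set set \<Rightarrow> (real^'n) set set" where
  "boundary_fan \<Sigma> = {\<gamma>\<in>\<Sigma>. \<exists>\<tau>\<in>cones_of_dim \<Sigma> (CARD('n) - 1). \<gamma> \<subseteq> \<tau>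
        \<and> card {\<sigma>\<in>fan_facets \<Sigma>. \<tau> \<subseteq> \<sigma>} = 1}"

definition is_interior :: "(real^'n::finite) set set \<Rightarrow> (real^'n) set \<Rightarrow> bool" where
  "is_interior \<Sigma> \<gamma> \<longleftrightarrow> \<gamma> \<in> \<Sigma> \<and> \<gamma> \<notin> boundary_fan \<Sigma>"

definition smoothness_params :: "(real^'n::finite) set set \<Rightarrow> ((real^'n) set \<Rightarrow> int) \<Rightarrow> bool" where
  "smoothness_params \<Sigma> \<alpha> \<longleftrightarrow> (\<forall>\<tau>\<in>cones_of_dim \<Sigma> (CARD('n) - 1).
       \<alpha> \<tau> \<ge> -1 \<and> (is_interior \<Sigma> \<tau> \<longrightarrow> \<alpha> \<tau> \<ge> 0))"

definition minus_one_fan :: "(real^'n::finite) set set \<Rightarrow> ((real^'n) set \<Rightarrow> int) \<Rightarrow> (real^'n) set set" where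
  "minus_one_fan \<Sigma> \<alpha> = {\<gamma>\<in>boundary_fan \<Sigma>.
       \<exists>\<tau>\<in>cones_of_dim \<Sigma> (CARD('n) - 1). \<alpha> \<tau> = -1 \<and> \<gamma> \<subseteq> \<tau>}"

text \<open>l_tau: a linear form generating the ideal of aff(tau) (a hyperplane through 0).\<close>

definition normal_vec :: "(real^'n::finite) set \<Rightarrow> real^'n" where
  "normal_vec \<tau> = (SOME a. a \<noteq> 0 \<and> (\<forall>x\<in>\<tau>. a \<bullet> x = 0))"

definition lform :: "(real^'n::finite) set \<Rightarrow> 'n mpoly" where
  "lform \<tau> = (\<Sum>i\<in>UNIV. mpconst (normal_vec \<tau> $ i) * mpvar i)"

definition J_ideal :: "(real^'n::finite) set set \<Rightarrow> ((real^'n) set \<Rightarrow> int) \<Rightarrow> (real^'n) set \<Rightarrow> 'n mpoly set" where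
  "J_ideal \<Sigma> \<alpha> \<gamma> =
     (if \<gamma> \<in> fan_facets \<Sigma> then {0}
      else gen_ideal {\<tau>\<in>cones_of_dim \<Sigma> (CARD('n) - 1) - minus_one_fan \<Sigma> \<alpha>. \<gamma> \<subseteq> \<tau>}
                     (\<lambda>\<tau>. lform \<tau> ^ nat (\<alpha> \<tau> + 1)))"

definition detk :: "nat \<Rightarrow> (nat \<Rightarrow> nat \<Rightarrow> real) \<Rightarrow> real" where
  "detk k M = (\<Sum>p | p permutes {..<k}. of_int (sign p) * (\<Prod>i<k. M i (p i)))"

definition is_orientation :: "(real^'n::finite) set set \<Rightarrow> ((real^'n) set \<Rightarrow> (real^'n) list) \<Rightarrow> bool" where
  "is_orientation \<Sigma> ori \<longleftrightarrow> (\<forall>\<gamma>\<in>\<Sigma>. length (ori \<gamma>) = dim \<gamma> \<and> span (set (ori \<gamma>)) = span \<gamma>)"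

text \<open>Sign comparing two ordered bases a, b of the same k-dimensional subspace:
  sign of det of the transition matrix = sign of det (a_i . b_j).\<close>

definition orient_sign :: "(real^'n::finite) list \<Rightarrow> (real^'n) list \<Rightarrow> real" where
  "orient_sign a b = sgn (detk (length b) (\<lambda>i j. (a ! i) \<bullet> (b ! j)))"

text \<open>Incidence number [P(gamma) : P(tau)] for a facet tau of gamma: compare the
  orientation of gamma with (inward vector, orientation of tau).\<close>

definition incidence :: "((real^'n::finite) set \<Rightarrow> (real^'n) list) \<Rightarrow> (real^'n) set \<Rightarrow> (real^'n) set \<Rightarrow> real" where
  "incidence ori \<gamma> \<tau> = orient_sign ((SOME w. w \<in> \<gamma> \<and> w \<notin> span \<tau>) # ori \<tau>) (ori \<gamma>)"

definition cells :: "(real^'n::finite) set set \<Rightarrow> (real^'n) set set \<Rightarrow> nat \<Rightarrow> (real^'n) set set" where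
  "cells \<Sigma> \<Sigma>' i = cones_of_dim \<Sigma> i - cones_of_dim \<Sigma>' i"

text \<open>Chains: functions from cones to S, only the values on cells i matter.
  Cellular boundary d_i : R_i \<rightarrow> R_(i-1).\<close>

definition bdry :: "(real^'n::finite) set set \<Rightarrow> (real^'n) set set \<Rightarrow> ((real^'n) set \<Rightarrow> (real^'n) list)
     \<Rightarrow> nat \<Rightarrow> ((real^'n) set \<Rightarrow> 'n mpoly) \<Rightarrow> ((real^'n) set \<Rightarrow> 'n mpoly)" where
  "bdry \<Sigma> \<Sigma>' ori i c = (\<lambda>\<tau>. \<Sum>\<gamma>\<in>{\<gamma>\<in>cells \<Sigma> \<Sigma>' i. \<tau> \<subseteq> \<gamma>}. mpconst (incidence ori \<gamma> \<tau>) * c \<gamma>)"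

text \<open>Cycles and boundaries of the quotient complex R/J[Sigma,Sigma'] (chains in degree i
  with entries taken modulo J(gamma)).\<close>

definition qcycle :: "(real^'n::finite) set set \<Rightarrow> (real^'n) set set \<Rightarrow> ((real^'n) set \<Rightarrow> int)
     \<Rightarrow> ((real^'n) set \<Rightarrow> (real^'n) list) \<Rightarrow> nat \<Rightarrow> ((real^'n) set \<Rightarrow> 'n mpoly) \<Rightarrow> bool" where
  "qcycle \<Sigma> \<Sigma>' \<alpha> ori i z \<longleftrightarrow>
     (\<forall>\<tau>\<in>cells \<Sigma> \<Sigma>' (i - 1). i \<ge> 1 \<longrightarrow> bdry \<Sigma> \<Sigma>' ori i z \<tau> \<in> J_ideal \<Sigma> \<alpha> \<tau>)"

definition qboundary :: "(real^'n::finite) set set \<Rightarrow> (real^'n) set set \<Rightarrow> ((real^'n) set \<Rightarrow> int)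
     \<Rightarrow> ((real^'n) set \<Rightarrow> (real^'n) list) \<Rightarrow> nat \<Rightarrow> ((real^'n) set \<Rightarrow> 'n mpoly) \<Rightarrow> bool" where
  "qboundary \<Sigma> \<Sigma>' \<alpha> ori i z \<longleftrightarrow>
     (\<exists>b. \<forall>\<gamma>\<in>cells \<Sigma> \<Sigma>' i. z \<gamma> - bdry \<Sigma> \<Sigma>' ori (i + 1) b \<gamma> \<in> J_ideal \<Sigma> \<alpha> \<gamma>)"

definition assoc_prime_homology :: "(real^'n::finite) set set \<Rightarrow> (real^'n) set set \<Rightarrow> ((real^'n) set \<Rightarrow> int)
     \<Rightarrow> ((real^'n) set \<Rightarrow> (real^'n) list) \<Rightarrow> nat \<Rightarrow> 'n mpoly set \<Rightarrow> bool" where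
  "assoc_prime_homology \<Sigma> \<Sigma>' \<alpha> ori i P \<longleftrightarrow> is_prime_ideal P \<and>
     (\<exists>z. qcycle \<Sigma> \<Sigma>' \<alpha> ori i z \<and> P = {f. qboundary \<Sigma> \<Sigma>' \<alpha> ori i (\<lambda>\<gamma>. f * z \<gamma>)})"

end

theory Submission
  imports Defs
begin

text \<open>For w \<in> W, the translation x \<mapsto> x + w is a ring automorphism of S fixing every linear
  form that vanishes at w, in particular every l_\<tau> of a cell \<tau> of codimension one. As the
  differential has constant coefficients, the translation therefore maps boundaries of
  R/J[\<Sigma>,\<Sigma>'] to boundaries. If f annihilates the class of a cycle z but f(w) \<noteq> 0, then
  translating by w turns f into a polynomial with nonzero constant term, which acts
  injectively on the homology of the graded complex. So the translate of z, and hence z, is a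
  boundary, and the annihilator would contain 1.\<close>

section \<open>Ring homomorphisms out of the polynomial ring\<close>

definition pm_extend :: "('k \<Rightarrow> 'v::zero \<Rightarrow> 'b::comm_monoid_add) \<Rightarrow> ('k \<Rightarrow>\<^sub>0 'v) \<Rightarrow> 'b" where
  "pm_extend F p = (\<Sum>k\<in>Poly_Mapping.keys p. F k (Poly_Mapping.lookup p k))"

lemma pm_extend_superset:
  assumes "finite A" "Poly_Mapping.keys p \<subseteq> A" "\<And>k. F k 0 = 0"
  shows "pm_extend F p = (\<Sum>k\<in>A. F k (Poly_Mapping.lookup p k))"
  unfolding pm_extend_def
  by (rule sum.mono_neutral_left) (use assms in \<open>auto simp: in_keys_iff\<close>)

lemma pm_extend_zero [simp]: "pm_extend F 0 = 0"
  by (simp add: pm_extend_def)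

lemma pm_extend_add:
  fixes p q :: "'k \<Rightarrow>\<^sub>0 'v::comm_monoid_add"
  assumes "\<And>k. F k 0 = 0" "\<And>k a b. F k (a + b) = F k a + F k b"
  shows "pm_extend F (p + q) = pm_extend F p + pm_extend F q"
  unfolding pm_extend_def by (rule setsum_keys_plus_distrib) (use assms in auto)

lemma pm_extend_single:
  assumes "\<And>k. F k 0 = 0"
  shows "pm_extend F (Poly_Mapping.single k v) = F k v"
  using pm_extend_superset[of "{k}" "Poly_Mapping.single k v" F] assms by simp

lemma pm_extend_sum:
  fixes g :: "'a \<Rightarrow> 'k \<Rightarrow>\<^sub>0 'v::comm_monoid_add"
  assumes "\<And>k. F k 0 = 0" "\<And>k a b. F k (a + b) = F k a + F k b"
  shows "pm_extend F (sum g A) = (\<Sum>a\<in>A. pm_extend F (g a))"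
  by (induction A rule: infinite_finite_induct) (simp_all add: pm_extend_add[OF assms])

lemma poly_mapping_sum_single:
  fixes p :: "'k \<Rightarrow>\<^sub>0 'v::comm_monoid_add"
  shows "p = (\<Sum>k\<in>Poly_Mapping.keys p. Poly_Mapping.single k (Poly_Mapping.lookup p k))"
proof (rule poly_mapping_eqI)
  fix x
  show "Poly_Mapping.lookup p x
      = Poly_Mapping.lookup (\<Sum>k\<in>Poly_Mapping.keys p. Poly_Mapping.single k (Poly_Mapping.lookup p k)) x"
    unfolding lookup_sum lookup_single
    by (cases "x \<in> Poly_Mapping.keys p") (auto simp: when_def in_keys_iff)
qed

lemma pm_extend_single_self: "pm_extend Poly_Mapping.single p = (p :: 'k \<Rightarrow>\<^sub>0 'v::comm_monoid_add)"
  by (metis pm_extend_def poly_mapping_sum_single)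

definition is_ring_hom :: "('a::comm_ring_1 \<Rightarrow> 'b::comm_ring_1) \<Rightarrow> bool" where
  "is_ring_hom h \<longleftrightarrow> (\<forall>x y. h (x + y) = h x + h y) \<and> (\<forall>x y. h (x * y) = h x * h y) \<and> h 1 = 1"

lemma ring_hom_add: "is_ring_hom h \<Longrightarrow> h (x + y) = h x + h y"
  by (simp add: is_ring_hom_def)

lemma ring_hom_mult: "is_ring_hom h \<Longrightarrow> h (x * y) = h x * h y"
  by (simp add: is_ring_hom_def)

lemma ring_hom_one: "is_ring_hom h \<Longrightarrow> h 1 = 1"
  by (simp add: is_ring_hom_def)

lemma ring_hom_zero: "is_ring_hom h \<Longrightarrow> h 0 = 0"
  using ring_hom_add[of h 0 0] by simp

lemma ring_hom_diff: "is_ring_hom h \<Longrightarrow> h (x - y) = h x - h y"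
  using ring_hom_add[of h "x - y" y] by (simp add: algebra_simps)

lemma ring_hom_sum: "is_ring_hom h \<Longrightarrow> h (sum f A) = (\<Sum>a\<in>A. h (f a))"
  by (induction A rule: infinite_finite_induct) (simp_all add: ring_hom_zero ring_hom_add)

lemma ring_hom_prod: "is_ring_hom h \<Longrightarrow> h (prod f A) = (\<Prod>a\<in>A. h (f a))"
  by (induction A rule: infinite_finite_induct) (simp_all add: ring_hom_one ring_hom_mult)

lemma ring_hom_power: "is_ring_hom h \<Longrightarrow> h (x ^ k) = h x ^ k"
  by (induction k) (simp_all add: ring_hom_one ring_hom_mult)

lemma is_ring_hom_id: "is_ring_hom (id :: real \<Rightarrow> real)"
  by (simp add: is_ring_hom_def)

lemma is_ring_hom_mpconst: "is_ring_hom mpconst"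
  unfolding is_ring_hom_def mpconst_def by (simp add: single_add mult_single)

definition monom_eval :: "('n::finite \<Rightarrow> 'b::comm_ring_1) \<Rightarrow> ('n \<Rightarrow>\<^sub>0 nat) \<Rightarrow> 'b" where
  "monom_eval v m = (\<Prod>j\<in>UNIV. v j ^ Poly_Mapping.lookup m j)"

lemma monom_eval_add: "monom_eval v (m + m') = monom_eval v m * monom_eval v m'"
  by (simp add: monom_eval_def lookup_add power_add prod.distrib)

lemma monom_eval_zero [simp]: "monom_eval v 0 = 1"
  by (simp add: monom_eval_def)

lemma monom_eval_var: "monom_eval v (Poly_Mapping.single j 1) = v j"
proof -
  have "monom_eval v (Poly_Mapping.single j 1) = (\<Prod>i\<in>UNIV. if i = j then v i else 1)"
    unfolding monom_eval_def by (rule prod.cong) (auto simp: lookup_single when_def)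
  then show ?thesis by simp
qed

lemma monom_eval_mpvar: "monom_eval (mpvar :: 'n::finite \<Rightarrow> 'n mpoly) m = Poly_Mapping.single m 1"
proof -
  have single_pow: "Poly_Mapping.single (Poly_Mapping.single j (1::nat)) (1::real) ^ e
      = Poly_Mapping.single (Poly_Mapping.single j e) 1" for j :: 'n and e
    by (induction e) (simp_all add: mult_single single_add[symmetric] mult.commute)
  have prod_single: "(\<Prod>j\<in>A. Poly_Mapping.single (a j) (1::real))
      = Poly_Mapping.single (\<Sum>j\<in>A. a j) 1" for A :: "'n set" and a
    by (induction A rule: infinite_finite_induct) (simp_all add: mult_single)
  have "monom_eval mpvar m
      = (\<Prod>j\<in>UNIV. Poly_Mapping.single (Poly_Mapping.single j (Poly_Mapping.lookup m j)) (1::real))"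
    unfolding monom_eval_def mpvar_def by (intro prod.cong refl single_pow)
  also have "\<dots> = Poly_Mapping.single (\<Sum>j\<in>UNIV. Poly_Mapping.single j (Poly_Mapping.lookup m j)) 1"
    by (rule prod_single)
  also have "(\<Sum>j\<in>UNIV. Poly_Mapping.single j (Poly_Mapping.lookup m j)) = m"
    by (rule poly_mapping_eqI) (simp add: lookup_sum lookup_single when_def)
  finally show ?thesis .
qed

definition mpoly_hom :: "(real \<Rightarrow> 'b::comm_ring_1) \<Rightarrow> ('n::finite \<Rightarrow> 'b) \<Rightarrow> 'n mpoly \<Rightarrow> 'b" where
  "mpoly_hom c v p = pm_extend (\<lambda>m a. c a * monom_eval v m) p"

lemma mpoly_hom_add: "is_ring_hom c \<Longrightarrow> mpoly_hom c v (p + q) = mpoly_hom c v p + mpoly_hom c v q"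
  unfolding mpoly_hom_def by (rule pm_extend_add) (simp_all add: ring_hom_zero ring_hom_add distrib_right)

lemma mpoly_hom_single:
  "is_ring_hom c \<Longrightarrow> mpoly_hom c v (Poly_Mapping.single m a) = c a * monom_eval v m"
  unfolding mpoly_hom_def by (rule pm_extend_single) (simp add: ring_hom_zero)

lemma mpoly_hom_sum: "is_ring_hom c \<Longrightarrow> mpoly_hom c v (sum g A) = (\<Sum>a\<in>A. mpoly_hom c v (g a))"
  unfolding mpoly_hom_def by (rule pm_extend_sum) (simp_all add: ring_hom_zero ring_hom_add distrib_right)

lemma mpoly_hom_mult:
  assumes c: "is_ring_hom c"
  shows "mpoly_hom c v (p * q) = mpoly_hom c v p * mpoly_hom c v q"
proof -
  let ?K = "Poly_Mapping.keys p" and ?L = "Poly_Mapping.keys q"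
  let ?p = "Poly_Mapping.lookup p" and ?q = "Poly_Mapping.lookup q"
  have "p * q = (\<Sum>k\<in>?K. Poly_Mapping.single k (?p k)) * (\<Sum>l\<in>?L. Poly_Mapping.single l (?q l))"
    using poly_mapping_sum_single[of p] poly_mapping_sum_single[of q] by simp
  also have "\<dots> = (\<Sum>k\<in>?K. \<Sum>l\<in>?L. Poly_Mapping.single (k + l) (?p k * ?q l))"
    by (simp add: sum_product mult_single)
  finally have "mpoly_hom c v (p * q)
      = (\<Sum>k\<in>?K. \<Sum>l\<in>?L. c (?p k) * monom_eval v k * (c (?q l) * monom_eval v l))"
    by (simp add: mpoly_hom_sum[OF c] mpoly_hom_single[OF c] ring_hom_mult[OF c] monom_eval_add mult_ac)
  also have "\<dots> = (\<Sum>k\<in>?K. c (?p k) * monom_eval v k) * (\<Sum>l\<in>?L. c (?q l) * monom_eval v l)"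
    by (simp add: sum_product)
  finally show ?thesis
    by (simp add: mpoly_hom_def pm_extend_def)
qed

lemma is_ring_hom_mpoly_hom: "is_ring_hom c \<Longrightarrow> is_ring_hom (mpoly_hom c v)"
  using mpoly_hom_single[of c v 0 1]
  by (simp add: is_ring_hom_def mpoly_hom_add mpoly_hom_mult ring_hom_one)

lemma mpoly_hom_mpconst: "is_ring_hom c \<Longrightarrow> mpoly_hom c v (mpconst a) = c a"
  unfolding mpconst_def by (simp add: mpoly_hom_single)

lemma mpoly_hom_mpvar: "is_ring_hom c \<Longrightarrow> mpoly_hom c v (mpvar j) = v j"
  unfolding mpvar_def
  using mpoly_hom_single[of c v "Poly_Mapping.single j 1" 1] monom_eval_var[of v j]
  by (simp add: ring_hom_one)

lemma ring_hom_mpoly_hom: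
  "is_ring_hom h \<Longrightarrow> h (mpoly_hom c v p) = mpoly_hom (h \<circ> c) (h \<circ> v) p"
  unfolding mpoly_hom_def pm_extend_def monom_eval_def
  by (simp add: ring_hom_sum ring_hom_mult ring_hom_prod ring_hom_power)

lemma mpoly_hom_mpconst_mpvar: "mpoly_hom mpconst mpvar p = p"
proof -
  have "mpoly_hom mpconst mpvar p = pm_extend Poly_Mapping.single p"
    unfolding mpoly_hom_def pm_extend_def monom_eval_mpvar mpconst_def
    by (rule sum.cong) (simp_all add: mult_single)
  then show ?thesis by (simp add: pm_extend_single_self)
qed

lemma mpeval_eq_mpoly_hom: "mpeval p x = mpoly_hom id (\<lambda>j. x $ j) p"
  by (simp add: mpeval_def mpoly_hom_def pm_extend_def monom_eval_def)

lemma is_ring_hom_mpeval: "is_ring_hom (\<lambda>p. mpeval p x)"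
  unfolding mpeval_eq_mpoly_hom by (rule is_ring_hom_mpoly_hom[OF is_ring_hom_id])

lemma mpeval_mpconst: "mpeval (mpconst a) x = a"
  by (simp add: mpeval_eq_mpoly_hom mpoly_hom_mpconst[OF is_ring_hom_id])

lemma mpeval_origin: "mpeval p 0 = Poly_Mapping.lookup p 0"
proof -
  have "mpeval p 0 = (\<Sum>m\<in>Poly_Mapping.keys p. if m = 0 then Poly_Mapping.lookup p m else 0)"
    unfolding mpeval_def
  proof (rule sum.cong[OF refl])
    fix m :: "'a \<Rightarrow>\<^sub>0 nat"
    show "Poly_Mapping.lookup p m * (\<Prod>j\<in>UNIV. (0 $ j) ^ Poly_Mapping.lookup m j)
        = (if m = 0 then Poly_Mapping.lookup p m else 0)"
    proof (cases "m = 0")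
      case False
      then obtain j where "Poly_Mapping.lookup m j \<noteq> 0"
        by (metis poly_mapping_eqI lookup_zero)
      then have "(\<Prod>j\<in>UNIV. ((0::real^'a) $ j) ^ Poly_Mapping.lookup m j) = 0"
        by (intro prod_zero) auto
      then show ?thesis using False by simp
    qed simp
  qed
  then show ?thesis by (simp add: in_keys_iff)
qed

section \<open>Translations\<close>

definition translate :: "real^'n \<Rightarrow> ('n::finite) mpoly \<Rightarrow> 'n mpoly" where
  "translate w p = mpoly_hom mpconst (\<lambda>j. mpvar j + mpconst (w $ j)) p"

lemma is_ring_hom_translate: "is_ring_hom (translate w)"
  unfolding translate_def by (rule is_ring_hom_mpoly_hom[OF is_ring_hom_mpconst])

lemma translate_mpconst: "translate w (mpconst a) = mpconst a"
  unfolding translate_def by (rule mpoly_hom_mpconst[OF is_ring_hom_mpconst])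

lemma translate_mpvar: "translate w (mpvar j) = mpvar j + mpconst (w $ j)"
  unfolding translate_def by (rule mpoly_hom_mpvar[OF is_ring_hom_mpconst])

lemma translate_translate_neg: "translate w (translate (- w) p) = p"
proof -
  have "translate w (translate (- w) p)
      = mpoly_hom (translate w \<circ> mpconst) (translate w \<circ> (\<lambda>j. mpvar j + mpconst ((- w) $ j))) p"
    unfolding translate_def[of "- w"] by (rule ring_hom_mpoly_hom[OF is_ring_hom_translate])
  also have "translate w \<circ> mpconst = mpconst"
    by (simp add: fun_eq_iff translate_mpconst)
  also have "translate w \<circ> (\<lambda>j. mpvar j + mpconst ((- w) $ j)) = mpvar"
    by (simp add: fun_eq_iff ring_hom_add[OF is_ring_hom_translate] translate_mpconst translate_mpvar
        add.assoc ring_hom_add[OF is_ring_hom_mpconst, symmetric] ring_hom_zero[OF is_ring_hom_mpconst])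
  finally show ?thesis by (simp add: mpoly_hom_mpconst_mpvar)
qed

lemma mpeval_translate_origin: "mpeval (translate w p) 0 = mpeval p w"
proof -
  let ?ev0 = "mpoly_hom id (\<lambda>j::'a. 0::real)"
  have ev0: "is_ring_hom ?ev0" by (rule is_ring_hom_mpoly_hom[OF is_ring_hom_id])
  have "mpeval (translate w p) 0 = mpoly_hom (?ev0 \<circ> mpconst) (?ev0 \<circ> (\<lambda>j. mpvar j + mpconst (w $ j))) p"
    unfolding mpeval_eq_mpoly_hom translate_def zero_index by (rule ring_hom_mpoly_hom[OF ev0])
  also have "?ev0 \<circ> mpconst = id"
    by (simp add: fun_eq_iff mpoly_hom_mpconst[OF is_ring_hom_id])
  also have "?ev0 \<circ> (\<lambda>j. mpvar j + mpconst (w $ j)) = (\<lambda>j. w $ j)"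
    by (simp add: fun_eq_iff ring_hom_add[OF ev0] mpoly_hom_mpconst[OF is_ring_hom_id]
        mpoly_hom_mpvar[OF is_ring_hom_id])
  finally show ?thesis unfolding mpeval_eq_mpoly_hom[of p w] .
qed

section \<open>Grading\<close>

definition monom_deg :: "('n::finite \<Rightarrow>\<^sub>0 nat) \<Rightarrow> nat" where
  "monom_deg m = (\<Sum>j\<in>UNIV. Poly_Mapping.lookup m j)"

lemma monom_deg_add: "monom_deg (m + m') = monom_deg m + monom_deg m'"
  by (simp add: monom_deg_def lookup_add sum.distrib)

lemma monom_deg_eq_0_iff: "monom_deg m = 0 \<longleftrightarrow> m = 0"
  by (auto simp: monom_deg_def intro: poly_mapping_eqI)

lemma monom_deg_var: "monom_deg (Poly_Mapping.single j 1) = 1"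
proof -
  have "monom_deg (Poly_Mapping.single j 1) = (\<Sum>i\<in>UNIV. if j = i then 1 else 0)"
    unfolding monom_deg_def lookup_single when_def by (rule refl)
  then show ?thesis by simp
qed

definition homog_comp :: "nat \<Rightarrow> ('n::finite) mpoly \<Rightarrow> 'n mpoly" where
  "homog_comp d p = pm_extend (\<lambda>m a. if monom_deg m = d then Poly_Mapping.single m a else 0) p"

definition homogeneous :: "nat \<Rightarrow> ('n::finite) mpoly \<Rightarrow> bool" where
  "homogeneous k p \<longleftrightarrow> (\<forall>m\<in>Poly_Mapping.keys p. monom_deg m = k)"

definition vanishes_to_order :: "nat \<Rightarrow> ('n::finite) mpoly \<Rightarrow> bool" where
  "vanishes_to_order k p \<longleftrightarrow> (\<forall>m\<in>Poly_Mapping.keys p. k \<le> monom_deg m)"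

lemma homog_comp_zero [simp]: "homog_comp d 0 = 0"
  by (simp add: homog_comp_def)

lemma homog_comp_add: "homog_comp d (p + q) = homog_comp d p + homog_comp d q"
  unfolding homog_comp_def by (rule pm_extend_add) (simp_all add: single_add)

lemma homog_comp_diff: "homog_comp d (p - q) = homog_comp d p - homog_comp d q"
  using homog_comp_add[of d "p - q" q] by (simp add: algebra_simps)

lemma homog_comp_single:
  "homog_comp d (Poly_Mapping.single m a) = (if monom_deg m = d then Poly_Mapping.single m a else 0)"
  unfolding homog_comp_def by (rule pm_extend_single) simp

lemma homog_comp_sum: "homog_comp d (sum g A) = (\<Sum>a\<in>A. homog_comp d (g a))"
  unfolding homog_comp_def by (rule pm_extend_sum) (simp_all add: single_add)

lemma sum_homog_comp:
  assumes "\<forall>m\<in>Poly_Mapping.keys p. monom_deg m < K"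
  shows "(\<Sum>d<K. homog_comp d p) = p"
proof -
  have "(\<Sum>d<K. homog_comp d p) = (\<Sum>m\<in>Poly_Mapping.keys p. \<Sum>d<K.
      if monom_deg m = d then Poly_Mapping.single m (Poly_Mapping.lookup p m) else 0)"
    unfolding homog_comp_def pm_extend_def by (rule sum.swap)
  also have "\<dots> = (\<Sum>m\<in>Poly_Mapping.keys p. Poly_Mapping.single m (Poly_Mapping.lookup p m))"
    using assms by (intro sum.cong refl) simp
  finally show ?thesis by (metis poly_mapping_sum_single)
qed

lemma homog_comp_vanishes_to_order: "vanishes_to_order k p \<Longrightarrow> d < k \<Longrightarrow> homog_comp d p = 0"
  unfolding vanishes_to_order_def homog_comp_def pm_extend_def by (intro sum.neutral) auto

lemma homogeneous_mult: "homogeneous a p \<Longrightarrow> homogeneous b q \<Longrightarrow> homogeneous (a + b) (p * q)"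
  unfolding homogeneous_def using keys_mult[of p q] by (force simp: monom_deg_add)

lemma homogeneous_add: "homogeneous a p \<Longrightarrow> homogeneous a q \<Longrightarrow> homogeneous a (p + q)"
  unfolding homogeneous_def using keys_add[of p q] by blast

lemma homogeneous_sum: "(\<And>x. x \<in> A \<Longrightarrow> homogeneous a (g x)) \<Longrightarrow> homogeneous a (sum g A)"
proof (induction A rule: infinite_finite_induct)
  case (insert x F)
  then show ?case by (simp add: homogeneous_add)
qed (simp_all add: homogeneous_def)

lemma homogeneous_mpconst: "homogeneous 0 (mpconst c)"
  by (simp add: homogeneous_def mpconst_def monom_deg_eq_0_iff)

lemma homogeneous_mpvar: "homogeneous 1 (mpvar j)"
  using monom_deg_var[of j] by (simp add: homogeneous_def mpvar_def)

lemma homogeneous_power: "homogeneous a p \<Longrightarrow> homogeneous (a * k) (p ^ k)"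
proof (induction k)
  case 0
  show ?case using homogeneous_mpconst[of 1] by (simp add: mpconst_def)
next
  case (Suc k)
  then show ?case using homogeneous_mult[of a p "a * k" "p ^ k"] by simp
qed

lemma vanishes_to_order_0 [simp]: "vanishes_to_order 0 p"
  by (simp add: vanishes_to_order_def)

lemma vanishes_to_order_mult:
  "vanishes_to_order a p \<Longrightarrow> vanishes_to_order b q \<Longrightarrow> vanishes_to_order (a + b) (p * q)"
  unfolding vanishes_to_order_def using keys_mult[of p q] by (force simp: monom_deg_add)

lemma vanishes_to_order_power: "vanishes_to_order 1 p \<Longrightarrow> vanishes_to_order k (p ^ k)"
proof (induction k)
  case (Suc k)
  then show ?case using vanishes_to_order_mult[of 1 p k "p ^ k"] by simp
qed (simp add: vanishes_to_order_def)

lemma vanishes_to_order_1: "Poly_Mapping.lookup p 0 = 0 \<Longrightarrow> vanishes_to_order 1 p"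
  unfolding vanishes_to_order_def by (metis in_keys_iff less_one monom_deg_eq_0_iff not_le)

lemma homog_comp_mult_homogeneous:
  assumes g: "homogeneous k g"
  shows "homog_comp d (q * g) = (if k \<le> d then homog_comp (d - k) q * g else 0)"
proof -
  let ?K = "Poly_Mapping.keys q" and ?L = "Poly_Mapping.keys g"
  let ?q = "Poly_Mapping.lookup q" and ?g = "Poly_Mapping.lookup g"
  have qg: "q * g = (\<Sum>m\<in>?K. \<Sum>l\<in>?L. Poly_Mapping.single (m + l) (?q m * ?g l))"
    by (subst (1 2) poly_mapping_sum_single) (simp add: sum_product mult_single)
  have L: "l \<in> ?L \<Longrightarrow> monom_deg l = k" for l
    using g by (simp add: homogeneous_def)
  have "homog_comp d (q * g) = (\<Sum>m\<in>?K. \<Sum>l\<in>?L.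
      if k \<le> d \<and> monom_deg m = d - k then Poly_Mapping.single (m + l) (?q m * ?g l) else 0)"
    unfolding qg homog_comp_sum homog_comp_single
    by (intro sum.cong refl) (auto simp: monom_deg_add L)
  also have "\<dots> = (if k \<le> d then homog_comp (d - k) q * g else 0)"
  proof (cases "k \<le> d")
    case True
    have "homog_comp (d - k) q * g
        = (\<Sum>m\<in>?K. if monom_deg m = d - k then Poly_Mapping.single m (?q m) else 0)
          * (\<Sum>l\<in>?L. Poly_Mapping.single l (?g l))"
      by (subst (2) poly_mapping_sum_single) (simp add: homog_comp_def pm_extend_def)
    also have "\<dots> = (\<Sum>m\<in>?K. \<Sum>l\<in>?L.
        if monom_deg m = d - k then Poly_Mapping.single (m + l) (?q m * ?g l) else 0)"
      unfolding sum_product by (intro sum.cong refl) (simp add: mult_single)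
    finally show ?thesis using True by simp
  qed simp
  finally show ?thesis .
qed

lemma homog_comp_mpconst_mult: "homog_comp d (mpconst c * p) = mpconst c * homog_comp d p"
  using homog_comp_mult_homogeneous[OF homogeneous_mpconst, of d p c] by (simp add: mult.commute)

lemma gen_ideal_zero: "0 \<in> gen_ideal A g"
  unfolding gen_ideal_def by (rule CollectI, rule exI[of _ "\<lambda>_. 0"]) simp

lemma gen_ideal_add: "f1 \<in> gen_ideal A g \<Longrightarrow> f2 \<in> gen_ideal A g \<Longrightarrow> f1 + f2 \<in> gen_ideal A g"
  unfolding gen_ideal_def
proof safe
  fix c1 c2
  show "\<exists>c. (\<Sum>a\<in>A. c1 a * g a) + (\<Sum>a\<in>A. c2 a * g a) = (\<Sum>a\<in>A. c a * g a)"
    by (rule exI[of _ "\<lambda>a. c1 a + c2 a"]) (simp add: sum.distrib distrib_right)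
qed

lemma gen_ideal_mult: "f \<in> gen_ideal A g \<Longrightarrow> q * f \<in> gen_ideal A g"
  unfolding gen_ideal_def
proof safe
  fix c
  show "\<exists>c'. q * (\<Sum>a\<in>A. c a * g a) = (\<Sum>a\<in>A. c' a * g a)"
    by (rule exI[of _ "\<lambda>a. q * c a"]) (simp add: sum_distrib_left mult.assoc)
qed

lemma gen_ideal_homog_comp:
  assumes "\<And>a. a \<in> A \<Longrightarrow> homogeneous (k a) (g a)" "f \<in> gen_ideal A g"
  shows "homog_comp d f \<in> gen_ideal A g"
proof -
  obtain c where f: "f = (\<Sum>a\<in>A. c a * g a)" using assms(2) unfolding gen_ideal_def by blast
  have "homog_comp d f = (\<Sum>a\<in>A. (if k a \<le> d then homog_comp (d - k a) (c a) else 0) * g a)"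
    unfolding f homog_comp_sum
    by (intro sum.cong refl) (use homog_comp_mult_homogeneous[OF assms(1)] in auto)
  then show ?thesis unfolding gen_ideal_def by (intro CollectI exI)
qed

lemma gen_ideal_ring_hom:
  assumes "is_ring_hom h" "\<And>a. a \<in> A \<Longrightarrow> h (g a) = g a" "f \<in> gen_ideal A g"
  shows "h f \<in> gen_ideal A g"
proof -
  obtain c where f: "f = (\<Sum>a\<in>A. c a * g a)" using assms(3) unfolding gen_ideal_def by blast
  have "h f = (\<Sum>a\<in>A. h (c a) * g a)"
    unfolding f ring_hom_sum[OF assms(1)]
    by (intro sum.cong refl) (simp add: ring_hom_mult[OF assms(1)] assms(2))
  then show ?thesis unfolding gen_ideal_def by (intro CollectI exI)
qed

lemma homogeneous_lform: "homogeneous 1 (lform \<tau>)"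
  unfolding lform_def
  by (rule homogeneous_sum) (use homogeneous_mult[OF homogeneous_mpconst homogeneous_mpvar] in simp)

lemma normal_vec_orthogonal:
  fixes \<tau> :: "(real^'n::finite) set"
  assumes "dim \<tau> < CARD('n)" "x \<in> \<tau>"
  shows "normal_vec \<tau> \<bullet> x = 0"
proof -
  obtain a :: "real^'n" where a: "a \<noteq> 0" "\<And>y. y \<in> span \<tau> \<Longrightarrow> orthogonal a y"
    using orthogonal_to_subspace_exists[of \<tau>] assms(1) by auto
  have "\<forall>x\<in>\<tau>. a \<bullet> x = 0"
    using a(2) span_base by (auto simp: orthogonal_def)
  then have "\<exists>a. a \<noteq> 0 \<and> (\<forall>x\<in>\<tau>. a \<bullet> x = 0)"
    using a(1) by blast
  then have "normal_vec \<tau> \<noteq> 0 \<and> (\<forall>x\<in>\<tau>. normal_vec \<tau> \<bullet> x = 0)"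
    unfolding normal_vec_def by (rule someI_ex)
  then show ?thesis using assms(2) by blast
qed

lemma translate_lform:
  fixes \<tau> :: "(real^'n::finite) set"
  assumes "dim \<tau> < CARD('n)" "w \<in> span \<tau>"
  shows "translate w (lform \<tau>) = lform \<tau>"
proof -
  let ?a = "normal_vec \<tau>"
  have "orthogonal ?a w"
    using orthogonal_to_span[OF assms(2)] normal_vec_orthogonal[OF assms(1)]
    by (simp add: orthogonal_def)
  have "translate w (lform \<tau>) = (\<Sum>i\<in>UNIV. mpconst (?a $ i) * (mpvar i + mpconst (w $ i)))"
    unfolding lform_def ring_hom_sum[OF is_ring_hom_translate] ring_hom_mult[OF is_ring_hom_translate]
      translate_mpconst translate_mpvar ..
  also have "\<dots> = lform \<tau> + mpconst (\<Sum>i\<in>UNIV. ?a $ i * w $ i)"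
    unfolding lform_def distrib_left sum.distrib ring_hom_sum[OF is_ring_hom_mpconst]
      ring_hom_mult[OF is_ring_hom_mpconst] ..
  also have "(\<Sum>i\<in>UNIV. ?a $ i * w $ i) = 0"
    using \<open>orthogonal ?a w\<close> by (simp add: orthogonal_def inner_vec_def)
  finally show ?thesis
    by (simp add: ring_hom_zero[OF is_ring_hom_mpconst])
qed

lemma J_ideal_zero: "0 \<in> J_ideal \<Sigma> \<alpha> \<gamma>"
  by (simp add: J_ideal_def gen_ideal_zero)

lemma J_ideal_add: "f1 \<in> J_ideal \<Sigma> \<alpha> \<gamma> \<Longrightarrow> f2 \<in> J_ideal \<Sigma> \<alpha> \<gamma> \<Longrightarrow> f1 + f2 \<in> J_ideal \<Sigma> \<alpha> \<gamma>"
  by (auto simp: J_ideal_def gen_ideal_add split: if_splits)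

lemma J_ideal_mult: "f \<in> J_ideal \<Sigma> \<alpha> \<gamma> \<Longrightarrow> q * f \<in> J_ideal \<Sigma> \<alpha> \<gamma>"
  by (auto simp: J_ideal_def gen_ideal_mult split: if_splits)

lemma J_ideal_homog_comp:
  assumes f: "f \<in> J_ideal \<Sigma> \<alpha> (\<gamma>::(real^'n::finite) set)"
  shows "homog_comp d f \<in> J_ideal \<Sigma> \<alpha> \<gamma>"
proof (cases "\<gamma> \<in> fan_facets \<Sigma>")
  case True
  then show ?thesis using f by (simp add: J_ideal_def)
next
  case False
  let ?T = "{\<tau> \<in> cones_of_dim \<Sigma> (CARD('n) - 1) - minus_one_fan \<Sigma> \<alpha>. \<gamma> \<subseteq> \<tau>}"
  have "homogeneous (1 * nat (\<alpha> \<tau> + 1)) (lform \<tau> ^ nat (\<alpha> \<tau> + 1))" for \<tau>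
    by (rule homogeneous_power[OF homogeneous_lform])
  then have "homog_comp d f \<in> gen_ideal ?T (\<lambda>\<tau>. lform \<tau> ^ nat (\<alpha> \<tau> + 1))"
    by (rule gen_ideal_homog_comp) (use f False in \<open>simp add: J_ideal_def\<close>)
  then show ?thesis using False by (simp add: J_ideal_def)
qed

lemma J_ideal_ring_hom:
  assumes h: "is_ring_hom h"
    and fixes_lform: "\<And>\<tau>. \<tau> \<in> cones_of_dim \<Sigma> (CARD('n) - 1) \<Longrightarrow> \<gamma> \<subseteq> \<tau> \<Longrightarrow> h (lform \<tau>) = lform \<tau>"
    and f: "f \<in> J_ideal \<Sigma> \<alpha> (\<gamma>::(real^'n::finite) set)"
  shows "h f \<in> J_ideal \<Sigma> \<alpha> \<gamma>"
proof (cases "\<gamma> \<in> fan_facets \<Sigma>")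
  case True
  then show ?thesis using f by (simp add: J_ideal_def ring_hom_zero[OF h])
next
  case False
  let ?T = "{\<tau> \<in> cones_of_dim \<Sigma> (CARD('n) - 1) - minus_one_fan \<Sigma> \<alpha>. \<gamma> \<subseteq> \<tau>}"
  have "h f \<in> gen_ideal ?T (\<lambda>\<tau>. lform \<tau> ^ nat (\<alpha> \<tau> + 1))"
    by (rule gen_ideal_ring_hom[OF h])
      (use f False in \<open>simp_all add: J_ideal_def ring_hom_power[OF h] fixes_lform\<close>)
  then show ?thesis using False by (simp add: J_ideal_def)
qed

lemma fan_face_mem: "is_fan \<Sigma> \<Longrightarrow> \<gamma> \<in> \<Sigma> \<Longrightarrow> F face_of \<gamma> \<Longrightarrow> F \<noteq> {} \<Longrightarrow> F \<in> \<Sigma>"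
  by (simp add: is_fan_def)

lemma fan_inter_face_of: "is_fan \<Sigma> \<Longrightarrow> \<gamma> \<in> \<Sigma> \<Longrightarrow> \<delta> \<in> \<Sigma> \<Longrightarrow> (\<gamma> \<inter> \<delta>) face_of \<delta>"
  by (simp add: is_fan_def)

lemma zero_mem_fan_cone:
  assumes "is_fan \<Sigma>" "\<gamma> \<in> \<Sigma>"
  shows "(0::real^'n::finite) \<in> \<gamma>"
proof -
  have "is_cone \<gamma>"
    using assms by (simp add: is_fan_def)
  then obtain V where "\<gamma> = pos_hull V"
    unfolding is_cone_def by blast
  then show ?thesis
    unfolding pos_hull_def by (auto intro!: exI[of _ "\<lambda>_. 0"])
qed

lemma finite_cells: "is_fan \<Sigma> \<Longrightarrow> finite (cells \<Sigma> \<Sigma>' i)"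
  by (rule finite_subset[of _ \<Sigma>]) (auto simp: is_fan_def cells_def cones_of_dim_def)

lemma cells_upward_closed:
  assumes \<Sigma>: "is_fan \<Sigma>" and \<Sigma>': "is_fan \<Sigma>'"
    and \<gamma>: "\<gamma> \<in> cells \<Sigma> \<Sigma>' i" and \<tau>: "\<tau> \<in> cones_of_dim \<Sigma> k" and "\<gamma> \<subseteq> \<tau>"
  shows "\<tau> \<in> cells (\<Sigma>::(real^'n::finite) set set) \<Sigma>' k"
proof -
  have "\<gamma> \<in> \<Sigma>" "\<tau> \<in> \<Sigma>"
    using \<gamma> \<tau> by (auto simp: cells_def cones_of_dim_def)
  have "\<tau> \<notin> \<Sigma>'"
  proof
    assume "\<tau> \<in> \<Sigma>'"
    have "\<gamma> face_of \<tau>"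
      using fan_inter_face_of[OF \<Sigma> \<open>\<gamma> \<in> \<Sigma>\<close> \<open>\<tau> \<in> \<Sigma>\<close>] \<open>\<gamma> \<subseteq> \<tau>\<close> by (simp add: Int_absorb2)
    moreover have "\<gamma> \<noteq> {}"
      using zero_mem_fan_cone[OF \<Sigma> \<open>\<gamma> \<in> \<Sigma>\<close>] by blast
    ultimately have "\<gamma> \<in> \<Sigma>'"
      by (rule fan_face_mem[OF \<Sigma>' \<open>\<tau> \<in> \<Sigma>'\<close>])
    then show False
      using \<gamma> by (simp add: cells_def cones_of_dim_def)
  qed
  then show ?thesis
    using \<tau> by (simp add: cells_def cones_of_dim_def)
qed

lemma qboundary_cong:
  assumes "qboundary \<Sigma> \<Sigma>' \<alpha> ori i z" "\<And>\<gamma>. \<gamma> \<in> cells \<Sigma> \<Sigma>' i \<Longrightarrow> z \<gamma> = z' \<gamma>"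
  shows "qboundary \<Sigma> \<Sigma>' \<alpha> ori i z'"
  using assms unfolding qboundary_def by auto

lemma qboundary_zero: "qboundary \<Sigma> \<Sigma>' \<alpha> ori i (\<lambda>\<gamma>. 0)"
  unfolding qboundary_def by (rule exI[of _ "\<lambda>_. 0"]) (simp add: bdry_def J_ideal_zero)

lemma qboundary_add:
  assumes "qboundary \<Sigma> \<Sigma>' \<alpha> ori i z1" "qboundary \<Sigma> \<Sigma>' \<alpha> ori i z2"
  shows "qboundary \<Sigma> \<Sigma>' \<alpha> ori i (\<lambda>\<gamma>. z1 \<gamma> + z2 \<gamma>)"
proof -
  obtain b1 where b1: "\<forall>\<gamma>\<in>cells \<Sigma> \<Sigma>' i. z1 \<gamma> - bdry \<Sigma> \<Sigma>' ori (i + 1) b1 \<gamma> \<in> J_ideal \<Sigma> \<alpha> \<gamma>"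
    using assms(1) unfolding qboundary_def by blast
  obtain b2 where b2: "\<forall>\<gamma>\<in>cells \<Sigma> \<Sigma>' i. z2 \<gamma> - bdry \<Sigma> \<Sigma>' ori (i + 1) b2 \<gamma> \<in> J_ideal \<Sigma> \<alpha> \<gamma>"
    using assms(2) unfolding qboundary_def by blast
  have "z1 \<gamma> + z2 \<gamma> - bdry \<Sigma> \<Sigma>' ori (i + 1) (\<lambda>\<gamma>. b1 \<gamma> + b2 \<gamma>) \<gamma>
      = (z1 \<gamma> - bdry \<Sigma> \<Sigma>' ori (i + 1) b1 \<gamma>) + (z2 \<gamma> - bdry \<Sigma> \<Sigma>' ori (i + 1) b2 \<gamma>)" for \<gamma>
    by (simp add: bdry_def distrib_left sum.distrib algebra_simps)
  then show ?thesis
    unfolding qboundary_def using b1 b2 J_ideal_add by (metis (no_types, lifting))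
qed

lemma qboundary_sum:
  assumes "\<And>d. d \<in> D \<Longrightarrow> qboundary \<Sigma> \<Sigma>' \<alpha> ori i (f d)"
  shows "qboundary \<Sigma> \<Sigma>' \<alpha> ori i (\<lambda>\<gamma>. \<Sum>d\<in>D. f d \<gamma>)"
  using assms
proof (induction D rule: infinite_finite_induct)
  case (insert x F)
  then show ?case using qboundary_add[of \<Sigma> \<Sigma>' \<alpha> ori i "f x" "\<lambda>\<gamma>. \<Sum>d\<in>F. f d \<gamma>"] by simp
qed (simp_all add: qboundary_zero)

lemma qboundary_map:
  fixes \<phi> :: "('n::finite) mpoly \<Rightarrow> 'n mpoly"
  assumes add: "\<And>p q. \<phi> (p + q) = \<phi> p + \<phi> q"
    and const: "\<And>c p. \<phi> (mpconst c * p) = mpconst c * \<phi> p"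
    and J: "\<And>\<gamma> f. \<gamma> \<in> cells \<Sigma> \<Sigma>' i \<Longrightarrow> f \<in> J_ideal \<Sigma> \<alpha> \<gamma> \<Longrightarrow> \<phi> f \<in> J_ideal \<Sigma> \<alpha> \<gamma>"
    and z: "qboundary (\<Sigma>::(real^'n) set set) \<Sigma>' \<alpha> ori i z"
  shows "qboundary \<Sigma> \<Sigma>' \<alpha> ori i (\<lambda>\<gamma>. \<phi> (z \<gamma>))"
proof -
  have zero: "\<phi> 0 = 0" using add[of 0 0] by simp
  have diff: "\<phi> (p - q) = \<phi> p - \<phi> q" for p q using add[of "p - q" q] by simp
  have sum: "\<phi> (sum g A) = (\<Sum>a\<in>A. \<phi> (g a))" for g :: "'a \<Rightarrow> 'n mpoly" and A
    by (induction A rule: infinite_finite_induct) (simp_all add: zero add)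
  obtain b where b: "\<forall>\<gamma>\<in>cells \<Sigma> \<Sigma>' i. z \<gamma> - bdry \<Sigma> \<Sigma>' ori (i + 1) b \<gamma> \<in> J_ideal \<Sigma> \<alpha> \<gamma>"
    using z unfolding qboundary_def by blast
  have "bdry \<Sigma> \<Sigma>' ori (i + 1) (\<lambda>\<gamma>. \<phi> (b \<gamma>)) \<gamma> = \<phi> (bdry \<Sigma> \<Sigma>' ori (i + 1) b \<gamma>)" for \<gamma>
    unfolding bdry_def sum const ..
  then show ?thesis
    unfolding qboundary_def using J b by (metis diff)
qed

lemma qboundary_mult:
  "qboundary (\<Sigma>::(real^'n::finite) set set) \<Sigma>' \<alpha> ori i z
    \<Longrightarrow> qboundary \<Sigma> \<Sigma>' \<alpha> ori i (\<lambda>\<gamma>. q * z \<gamma>)"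
  by (rule qboundary_map) (simp_all add: distrib_left mult.left_commute J_ideal_mult)

lemma qboundary_homog_comp:
  "qboundary (\<Sigma>::(real^'n::finite) set set) \<Sigma>' \<alpha> ori i z
    \<Longrightarrow> qboundary \<Sigma> \<Sigma>' \<alpha> ori i (\<lambda>\<gamma>. homog_comp d (z \<gamma>))"
  by (rule qboundary_map) (simp_all add: homog_comp_add homog_comp_mpconst_mult J_ideal_homog_comp)

lemma qboundary_translate:
  assumes "is_fan \<Sigma>" "is_fan \<Sigma>'"
    and w: "\<And>\<tau>. \<tau> \<in> cells \<Sigma> \<Sigma>' (CARD('n) - 1) \<Longrightarrow> w \<in> span \<tau>"
    and z: "qboundary (\<Sigma>::(real^'n::finite) set set) \<Sigma>' \<alpha> ori i z"
  shows "qboundary \<Sigma> \<Sigma>' \<alpha> ori i (\<lambda>\<gamma>. translate w (z \<gamma>))"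
proof (rule qboundary_map[OF _ _ _ z])
  fix \<gamma> f
  assume \<gamma>: "\<gamma> \<in> cells \<Sigma> \<Sigma>' i" and f: "f \<in> J_ideal \<Sigma> \<alpha> \<gamma>"
  show "translate w f \<in> J_ideal \<Sigma> \<alpha> \<gamma>"
  proof (rule J_ideal_ring_hom[OF is_ring_hom_translate _ f])
    fix \<tau> assume \<tau>: "\<tau> \<in> cones_of_dim \<Sigma> (CARD('n) - 1)" "\<gamma> \<subseteq> \<tau>"
    have "w \<in> span \<tau>"
      using w cells_upward_closed[OF assms(1,2) \<gamma> \<tau>] by blast
    moreover have "dim \<tau> < CARD('n)"
      using \<tau> by (simp add: cones_of_dim_def)
    ultimately show "translate w (lform \<tau>) = lform \<tau>"
      by (intro translate_lform)
  qed
qed (simp_all add: ring_hom_add[OF is_ring_hom_translate] ring_hom_mult[OF is_ring_hom_translate]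
      translate_mpconst)

text \<open>Since the complex is graded, a chain congruent to boundaries modulo arbitrarily high
  powers of the maximal ideal of the origin is itself a boundary: its homogeneous
  components of low degree are unaffected by the error term.\<close>

lemma qboundary_if_approximable:
  assumes fin: "finite (cells \<Sigma> \<Sigma>' i)"
    and approx: "\<And>K. \<exists>y. qboundary (\<Sigma>::(real^'n::finite) set set) \<Sigma>' \<alpha> ori i (\<lambda>\<gamma>. z \<gamma> - y \<gamma>)
                          \<and> (\<forall>\<gamma>. vanishes_to_order K (y \<gamma>))"
  shows "qboundary \<Sigma> \<Sigma>' \<alpha> ori i z"
proof -
  have "finite (\<Union>\<gamma>\<in>cells \<Sigma> \<Sigma>' i. monom_deg ` Poly_Mapping.keys (z \<gamma>))"
    using fin by simp
  then obtain K where K: "\<And>\<gamma> m. \<gamma> \<in> cells \<Sigma> \<Sigma>' i \<Longrightarrow> m \<in> Poly_Mapping.keys (z \<gamma>) \<Longrightarrow> monom_deg m < K"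
    unfolding finite_nat_set_iff_bounded by blast
  obtain y where y: "qboundary \<Sigma> \<Sigma>' \<alpha> ori i (\<lambda>\<gamma>. z \<gamma> - y \<gamma>)" "\<And>\<gamma>. vanishes_to_order K (y \<gamma>)"
    using approx by blast
  have "qboundary \<Sigma> \<Sigma>' \<alpha> ori i (\<lambda>\<gamma>. homog_comp d (z \<gamma>))" if "d < K" for d
    using qboundary_homog_comp[OF y(1), of d] homog_comp_vanishes_to_order[OF y(2) that]
    by (simp add: homog_comp_diff)
  then have "qboundary \<Sigma> \<Sigma>' \<alpha> ori i (\<lambda>\<gamma>. \<Sum>d<K. homog_comp d (z \<gamma>))"
    by (intro qboundary_sum) simp
  then show ?thesis
    by (rule qboundary_cong) (use K sum_homog_comp in blast)
qed

text \<open>Writing the unit as c (1 - g) with g vanishing at the origin, the truncated geometric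
  series z - g^K z = (1 + g + \<dots> + g^(K-1)) (1 - g) z is a boundary for every K.\<close>

lemma qboundary_cancel_unit:
  assumes fz: "qboundary (\<Sigma>::(real^'n::finite) set set) \<Sigma>' \<alpha> ori i (\<lambda>\<gamma>. f * z \<gamma>)"
    and f0: "Poly_Mapping.lookup f 0 \<noteq> 0"
    and fin: "finite (cells \<Sigma> \<Sigma>' i)"
  shows "qboundary \<Sigma> \<Sigma>' \<alpha> ori i z"
proof (rule qboundary_if_approximable[OF fin])
  define c where "c = Poly_Mapping.lookup f 0"
  define g where "g = 1 - mpconst (1 / c) * f"
  have "qboundary \<Sigma> \<Sigma>' \<alpha> ori i (\<lambda>\<gamma>. (1 - g) * z \<gamma>)"
    using qboundary_mult[OF fz, of "mpconst (1 / c)"] by (simp add: g_def mult.assoc)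
  have "mpeval g 0 = 1 - 1 / c * mpeval f 0"
    by (simp add: g_def ring_hom_diff[OF is_ring_hom_mpeval] ring_hom_mult[OF is_ring_hom_mpeval]
        ring_hom_one[OF is_ring_hom_mpeval] mpeval_mpconst)
  then have "mpeval g 0 = 0"
    using f0 by (simp add: c_def mpeval_origin)
  have geometric: "qboundary \<Sigma> \<Sigma>' \<alpha> ori i (\<lambda>\<gamma>. z \<gamma> - g ^ K * z \<gamma>)" for K
  proof (induction K)
    case 0
    show ?case using qboundary_zero by simp
  next
    case (Suc K)
    have "z \<gamma> - g ^ Suc K * z \<gamma> = (1 - g) * z \<gamma> + g * (z \<gamma> - g ^ K * z \<gamma>)" for \<gamma>
      by (simp add: algebra_simps)
    then show ?case
      using qboundary_add[OF \<open>qboundary _ _ _ _ _ (\<lambda>\<gamma>. (1 - g) * z \<gamma>)\<close> qboundary_mult[OF Suc]]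
      by simp
  qed
  fix K
  have "vanishes_to_order 1 g"
    using vanishes_to_order_1[of g] \<open>mpeval g 0 = 0\<close> by (simp add: mpeval_origin)
  then have "vanishes_to_order K (g ^ K * z \<gamma>)" for \<gamma>
    using vanishes_to_order_mult[OF vanishes_to_order_power vanishes_to_order_0] by simp
  then show "\<exists>y. qboundary \<Sigma> \<Sigma>' \<alpha> ori i (\<lambda>\<gamma>. z \<gamma> - y \<gamma>) \<and> (\<forall>\<gamma>. vanishes_to_order K (y \<gamma>))"
    using geometric[of K] by (intro exI[of _ "\<lambda>\<gamma>. g ^ K * z \<gamma>"]) simp
qed

lemma qboundary_cancel_nonvanishing:
  assumes "is_fan \<Sigma>" "is_fan \<Sigma>'"
    and w: "\<And>\<tau>. \<tau> \<in> cells \<Sigma> \<Sigma>' (CARD('n) - 1) \<Longrightarrow> w \<in> span \<tau>"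
    and fz: "qboundary (\<Sigma>::(real^'n::finite) set set) \<Sigma>' \<alpha> ori i (\<lambda>\<gamma>. f * z \<gamma>)"
    and "mpeval f w \<noteq> 0"
  shows "qboundary \<Sigma> \<Sigma>' \<alpha> ori i z"
proof -
  have "qboundary \<Sigma> \<Sigma>' \<alpha> ori i (\<lambda>\<gamma>. translate w f * translate w (z \<gamma>))"
    using qboundary_translate[OF assms(1,2) w fz] by (simp add: ring_hom_mult[OF is_ring_hom_translate])
  moreover have "Poly_Mapping.lookup (translate w f) 0 \<noteq> 0"
    using \<open>mpeval f w \<noteq> 0\<close> by (simp add: mpeval_origin[symmetric] mpeval_translate_origin)
  ultimately have "qboundary \<Sigma> \<Sigma>' \<alpha> ori i (\<lambda>\<gamma>. translate w (z \<gamma>))"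
    by (rule qboundary_cancel_unit[OF _ _ finite_cells[OF assms(1)]])
  then have "qboundary \<Sigma> \<Sigma>' \<alpha> ori i (\<lambda>\<gamma>. translate (- w) (translate w (z \<gamma>)))"
    by (rule qboundary_translate[OF assms(1,2), rotated]) (use w in \<open>simp add: span_neg\<close>)
  then show ?thesis
    using translate_translate_neg[of "- w"] by simp
qed

theorem lemma5p2:
  fixes \<Sigma> \<Sigma>' :: "(real^'n::finite) set set"
    and \<alpha> :: "(real^'n) set \<Rightarrow> int"
    and ori :: "(real^'n) set \<Rightarrow> (real^'n) list"
    and W :: "(real^'n) set"
    and i :: nat and P :: "'n mpoly set"
  assumes "is_fan \<Sigma>" and "is_pure \<Sigma>" and "is_hereditary \<Sigma>"
    and "smoothness_params \<Sigma> \<alpha>"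
    and "is_fan \<Sigma>'" and "\<Sigma>' \<subseteq> \<Sigma>"
    and "subspace W"
    and "W \<subseteq> (\<Inter>\<tau>\<in>cells \<Sigma> \<Sigma>' (CARD('n) - 1). span \<tau>)"
    and "is_orientation \<Sigma> ori"
    and "assoc_prime_homology \<Sigma> \<Sigma>' \<alpha> ori i P"
  shows "P \<subseteq> vanishing_ideal W"
proof
  fix f assume "f \<in> P"
  obtain z where "is_prime_ideal P" and P: "P = {f. qboundary \<Sigma> \<Sigma>' \<alpha> ori i (\<lambda>\<gamma>. f * z \<gamma>)}"
    using assms(10) unfolding assoc_prime_homology_def by blast
  then have "\<not> qboundary \<Sigma> \<Sigma>' \<alpha> ori i z"
    by (auto simp: is_prime_ideal_def)
  moreover have "qboundary \<Sigma> \<Sigma>' \<alpha> ori i (\<lambda>\<gamma>. f * z \<gamma>)"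
    using \<open>f \<in> P\<close> P by blast
  ultimately show "f \<in> vanishing_ideal W"
    using qboundary_cancel_nonvanishing[OF assms(1,5)] assms(8)
    unfolding vanishing_ideal_def by blast
qed

end
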